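(* Let $\alpha\in\mathbb{R}$ and $\{\mu_n\}_{n\in\mathbb{N}}\cup\{\mu\}\subset\mathcal{M}(\mathbb{R})$. (a) If $F^{(\alpha)}_{\mu_n}(x)\to F^{(\alpha)}_\mu(x)$ at all continuity points $x$ of $\mu$ and $\{\mu_n\}$ is bounded on compact sets, then $\mu_n\to\mu$ vaguely. (b) If $\mu_n\to\mu$ vaguely, $\alpha$ is a continuity point of $\mu$, and $\{\mu_n\}$ has no mass at every continuity point of $\mu$, then $F^{(\alpha)}_{\mu_n}(x)\to F^{(\alpha)}_\mu(x)$ at all continuity points $x$ of $\mu$. Moreover, both parts remain true for $\alpha=-\infty$ (resp. $\alpha=+\infty$), where in (a) one requires in addition that $\sup_n|\mu_n|((-\infty,c])<\infty$ for every $c\in\mathbb{R}$ (resp. $\sup_n|\mu_n|((c,\infty))<\infty$ for every $c\in\mathbb{R}$), and in (b) the requirement that $\alpha$ be a continuity point is replaced by the requirement that $\{\mu_n\}$ has no mass at $-\infty$ (resp. $+\infty$), i.e. for every $\varepsilon>0$ there is $c\in\mathbb{R}$ with $\limsup_n|\mu_n|((-\infty,c))\le\varepsilon$ (resp. $\limsup_n|\mu_n|((c,\infty))\le\varepsilon$).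
   Context: $\mathcal{M}(\mathbb{R})$ is the set of finite signed Borel measures on $\mathbb{R}$ (all are Radon); $|\mu|$ denotes the variation measure. For $\alpha\in\mathbb{R}$, $F^{(\alpha)}_\mu(x)=\mu((\alpha,x])$ for $x\ge\alpha$ and $F^{(\alpha)}_\mu(x)=-\mu((x,\alpha])$ for $x<\alpha$; further $F^{(-\infty)}_\mu(x)=\mu((-\infty,x])$ and $F^{(+\infty)}_\mu(x)=-\mu((x,\infty))$. A point $x\in\mathbb{R}$ is a continuity point of $\mu$ if $\mu(\{x\})=0$. Vague convergence $\mu_n\to\mu$ means $\int f\,d\mu_n\to\int f\,d\mu$ for all continuous $f$ with compact support. $\{\mu_n\}$ is bounded on compact sets if $\sup_n|\mu_n|(K)<\infty$ for every compact $K\subset\mathbb{R}$. $\{\mu_n\}$ has no mass at a point $x\in\mathbb{R}$ if for every $\varepsilon>0$ there is an open neighbourhood $N$ of $x$ with $\limsup_{n\to\infty}|\mu_n|(N)\le\varepsilon$. *)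

theory Defs
  imports "HOL-Analysis.Analysis" "HOL-Library.Disjoint_Sets"
begin

text \<open>A finite signed Borel measure on the reals is represented by a pair (P, N) of
  finite Borel measures, standing for the set function P - N (Jordan decomposition
  shows every finite signed measure arises this way). All notions below depend only
  on the difference P - N.\<close>

type_synonym smeasure = "real measure \<times> real measure"

definition finite_borel :: "real measure \<Rightarrow> bool" where
  "finite_borel M \<longleftrightarrow> sets M = sets borel \<and> finite_measure M"

definition is_smeasure :: "smeasure \<Rightarrow> bool" where
  "is_smeasure \<mu> \<longleftrightarrow> finite_borel (fst \<mu>) \<and> finite_borel (snd \<mu>)"

definition sm :: "smeasure \<Rightarrow> real set \<Rightarrow> real" where
  "sm \<mu> A = measure (fst \<mu>) A - measure (snd \<mu>) A"

definition var :: "smeasure \<Rightarrow> real set \<Rightarrow> real" where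
  "var \<mu> A = Sup {(\<Sum>B\<in>P. \<bar>sm \<mu> B\<bar>) | P. finite P \<and> P \<subseteq> sets borel \<and> disjoint P \<and> \<Union>P = A}"

definition sint :: "smeasure \<Rightarrow> (real \<Rightarrow> real) \<Rightarrow> real" where
  "sint \<mu> f = integral\<^sup>L (fst \<mu>) f - integral\<^sup>L (snd \<mu>) f"

definition Fdist :: "ereal \<Rightarrow> smeasure \<Rightarrow> real \<Rightarrow> real" where
  "Fdist \<alpha> \<mu> x =
     (if \<alpha> = -\<infinity> then sm \<mu> {..x}
      else if \<alpha> = \<infinity> then - sm \<mu> {x<..}
      else if real_of_ereal \<alpha> \<le> x then sm \<mu> {real_of_ereal \<alpha><..x}
      else - sm \<mu> {x<..real_of_ereal \<alpha>})"

definition cont_point :: "smeasure \<Rightarrow> real \<Rightarrow> bool" where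
  "cont_point \<mu> x \<longleftrightarrow> sm \<mu> {x} = 0"

definition vague_conv :: "(nat \<Rightarrow> smeasure) \<Rightarrow> smeasure \<Rightarrow> bool" where
  "vague_conv \<mu>s \<mu> \<longleftrightarrow>
     (\<forall>f::real \<Rightarrow> real. continuous_on UNIV f \<and> (\<exists>K. compact K \<and> (\<forall>x. x \<notin> K \<longrightarrow> f x = 0)) \<longrightarrow>
        (\<lambda>n. sint (\<mu>s n) f) \<longlonglongrightarrow> sint \<mu> f)"

definition bounded_on_compacts :: "(nat \<Rightarrow> smeasure) \<Rightarrow> bool" where
  "bounded_on_compacts \<mu>s \<longleftrightarrow> (\<forall>K::real set. compact K \<longrightarrow> bdd_above (range (\<lambda>n. var (\<mu>s n) K)))"

definition no_mass_at :: "(nat \<Rightarrow> smeasure) \<Rightarrow> real \<Rightarrow> bool" where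
  "no_mass_at \<mu>s x \<longleftrightarrow> (\<forall>\<epsilon>>0. \<exists>N. open N \<and> x \<in> N \<and>
      limsup (\<lambda>n. ereal (var (\<mu>s n) N)) \<le> ereal \<epsilon>)"

definition no_mass_at_minf :: "(nat \<Rightarrow> smeasure) \<Rightarrow> bool" where
  "no_mass_at_minf \<mu>s \<longleftrightarrow> (\<forall>\<epsilon>>0. \<exists>c. limsup (\<lambda>n. ereal (var (\<mu>s n) {..<c})) \<le> ereal \<epsilon>)"

definition no_mass_at_pinf :: "(nat \<Rightarrow> smeasure) \<Rightarrow> bool" where
  "no_mass_at_pinf \<mu>s \<longleftrightarrow> (\<forall>\<epsilon>>0. \<exists>c. limsup (\<lambda>n. ereal (var (\<mu>s n) {c<..})) \<le> ereal \<epsilon>)"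

definition Fconv :: "ereal \<Rightarrow> (nat \<Rightarrow> smeasure) \<Rightarrow> smeasure \<Rightarrow> bool" where
  "Fconv \<alpha> \<mu>s \<mu> \<longleftrightarrow> (\<forall>x. cont_point \<mu> x \<longrightarrow> (\<lambda>n. Fdist \<alpha> (\<mu>s n) x) \<longlonglongrightarrow> Fdist \<alpha> \<mu> x)"

end

(* A Borel function h bounded by c and vanishing off K satisfies |int h dmu| <= c |mu|(K): round h
   to the step function floor(m h)/m, whose level sets partition K, and let m tend to infinity.

   (a) A compactly supported continuous f is uniformly close to a step function on the half-open
   cells of a grid that avoids the countably many atoms of mu. The distribution functions give
   convergence of the mu_n on each cell, and the bound on |mu_n| over a fixed compact interval
   makes the approximation error uniform in n.

   (b) The indicator of an interval (a,b] is replaced by a continuous plateau function that is 1 on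
   [a,b] and vanishes outside (a-d,b+d). Vague convergence applies to it, its error is carried by
   neighbourhoods of a and b where the mu_n have asymptotically no mass, and at a continuity point
   a of mu the error for mu vanishes as d tends to 0. For alpha = -infinity or +infinity a tail of
   small variation is cut off in addition. *)

theory Submission
  imports Defs "HOL-Probability.Distribution_Functions"
begin

section \<open>Integration against a signed measure\<close>

lemma finite_borel_measure_components:
  assumes "is_smeasure \<mu>"
  shows "finite_borel_measure (fst \<mu>)" "finite_borel_measure (snd \<mu>)"
  using assms
  unfolding is_smeasure_def finite_borel_def
    finite_borel_measure_def finite_borel_measure_axioms_def
  by simp_all

definition bounded_borel :: "(real \<Rightarrow> real) \<Rightarrow> bool" where
  "bounded_borel f \<longleftrightarrow> f \<in> borel_measurable borel \<and> (\<exists>c. \<forall>x. \<bar>f x\<bar> \<le> c)"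

lemma (in finite_borel_measure) integrable_bounded_measurable:
  fixes f :: "real \<Rightarrow> real"
  assumes "f \<in> borel_measurable borel" "\<And>x. \<bar>f x\<bar> \<le> c"
  shows "integrable M f"
  using assms
  by (intro integrable_const_bound[where B=c]) (auto simp: measurable_cong_sets[OF M_is_borel])

lemma integrable_components:
  assumes "is_smeasure \<mu>" "bounded_borel f"
  shows "integrable (fst \<mu>) f" "integrable (snd \<mu>) f"
  using assms(2) finite_borel_measure_components[OF assms(1)]
    finite_borel_measure.integrable_bounded_measurable[of "fst \<mu>" f]
    finite_borel_measure.integrable_bounded_measurable[of "snd \<mu>" f]
  unfolding bounded_borel_def by blast+

lemma bounded_borel_indicator: "A \<in> sets borel \<Longrightarrow> bounded_borel (indicator A)"
  unfolding bounded_borel_def by (auto intro!: exI[of _ 1] simp: indicator_def)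

lemma bounded_borel_add:
  assumes "bounded_borel f" "bounded_borel g"
  shows "bounded_borel (\<lambda>x. f x + g x)"
proof -
  obtain c d where "\<And>x. \<bar>f x\<bar> \<le> c" "\<And>x. \<bar>g x\<bar> \<le> d"
    using assms unfolding bounded_borel_def by blast
  then have "\<bar>f x + g x\<bar> \<le> c + d" for x
    by (meson abs_triangle_ineq add_mono order_trans)
  then show ?thesis using assms unfolding bounded_borel_def by auto
qed

lemma bounded_borel_cmult: "bounded_borel f \<Longrightarrow> bounded_borel (\<lambda>x. a * f x)"
  unfolding bounded_borel_def
proof (elim conjE exE, intro conjI exI allI)
  fix c x assume "\<forall>x. \<bar>f x\<bar> \<le> c"
  then show "\<bar>a * f x\<bar> \<le> \<bar>a\<bar> * c" by (simp add: abs_mult mult_left_mono)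
qed auto

lemma bounded_borel_sum:
  "finite I \<Longrightarrow> (\<And>i. i \<in> I \<Longrightarrow> bounded_borel (f i)) \<Longrightarrow> bounded_borel (\<lambda>x. \<Sum>i\<in>I. f i x)"
proof (induction I rule: finite_induct)
  case empty
  show ?case unfolding bounded_borel_def by auto
next
  case (insert i I)
  then show ?case using bounded_borel_add[of "f i" "\<lambda>x. \<Sum>i\<in>I. f i x"] by simp
qed

lemma sint_add:
  assumes "is_smeasure \<mu>" "bounded_borel f" "bounded_borel g"
  shows "sint \<mu> (\<lambda>x. f x + g x) = sint \<mu> f + sint \<mu> g"
  using integrable_components[OF assms(1)] assms(2,3) unfolding sint_def by simp

lemma sint_diff:
  assumes "is_smeasure \<mu>" "bounded_borel f" "bounded_borel g"
  shows "sint \<mu> (\<lambda>x. f x - g x) = sint \<mu> f - sint \<mu> g"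
  using integrable_components[OF assms(1)] assms(2,3) unfolding sint_def by simp

lemma sint_sum:
  assumes "is_smeasure \<mu>" "finite I" "\<And>i. i \<in> I \<Longrightarrow> bounded_borel (f i)"
  shows "sint \<mu> (\<lambda>x. \<Sum>i\<in>I. f i x) = (\<Sum>i\<in>I. sint \<mu> (f i))"
  using integrable_components[OF assms(1)] assms(2,3)
  unfolding sint_def by (simp add: sum_subtractf)

lemma sint_cmult: "sint \<mu> (\<lambda>x. c * f x) = c * sint \<mu> f"
  unfolding sint_def by (simp add: algebra_simps)

lemma sint_indicator:
  assumes "is_smeasure \<mu>" "A \<in> sets borel"
  shows "sint \<mu> (indicator A) = sm \<mu> A"
  using assms finite_borel_measure.borel_UNIV[OF finite_borel_measure_components(1)]
    finite_borel_measure.borel_UNIV[OF finite_borel_measure_components(2)]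
    finite_borel_measure.sets_M[OF finite_borel_measure_components(1)]
    finite_borel_measure.sets_M[OF finite_borel_measure_components(2)]
  unfolding sint_def sm_def by simp

lemma sint_step:
  assumes "is_smeasure \<mu>" "finite J" "\<And>j. j \<in> J \<Longrightarrow> B j \<in> sets borel"
  shows "sint \<mu> (\<lambda>x. \<Sum>j\<in>J. y j * indicator (B j) x) = (\<Sum>j\<in>J. y j * sm \<mu> (B j))"
  using assms
  by (subst sint_sum)
    (simp_all add: bounded_borel_cmult bounded_borel_indicator sint_cmult sint_indicator)

lemma abs_sint_le_total_mass:
  assumes "is_smeasure \<mu>" "f \<in> borel_measurable borel" "\<And>x. \<bar>f x\<bar> \<le> c"
  shows "\<bar>sint \<mu> f\<bar> \<le> c * (measure (fst \<mu>) UNIV + measure (snd \<mu>) UNIV)"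
proof -
  have "\<bar>integral\<^sup>L M f\<bar> \<le> c * measure M UNIV" if "finite_borel_measure M" for M
  proof -
    interpret finite_borel_measure M by fact
    have "\<bar>integral\<^sup>L M f\<bar> \<le> integral\<^sup>L M (\<lambda>x. \<bar>f x\<bar>)"
      by (rule integral_abs_bound)
    also have "\<dots> \<le> integral\<^sup>L M (\<lambda>_. c)"
      using integrable_bounded_measurable[OF assms(2,3)] assms(3) by (intro integral_mono) auto
    finally show ?thesis by (simp add: borel_UNIV mult.commute)
  qed
  from this[OF finite_borel_measure_components(1)[OF assms(1)]]
    this[OF finite_borel_measure_components(2)[OF assms(1)]]
  show ?thesis unfolding sint_def by (simp add: distrib_left)
qed

lemma sint_tendsto_dominated:
  assumes "is_smeasure \<mu>" "f \<in> borel_measurable borel" "\<And>k. s k \<in> borel_measurable borel"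
    "\<And>x. (\<lambda>k. s k x) \<longlonglongrightarrow> f x" "\<And>k x. \<bar>s k x\<bar> \<le> 1"
  shows "(\<lambda>k. sint \<mu> (s k)) \<longlonglongrightarrow> sint \<mu> f"
proof -
  have "(\<lambda>k. integral\<^sup>L M (s k)) \<longlonglongrightarrow> integral\<^sup>L M f" if "finite_borel_measure M" for M
  proof -
    interpret finite_borel_measure M by fact
    show ?thesis
      using assms(2-5)
      by (intro integral_dominated_convergence[where w="\<lambda>_. 1"])
        (auto simp: measurable_cong_sets[OF M_is_borel])
  qed
  then show ?thesis
    unfolding sint_def using finite_borel_measure_components[OF assms(1)] by (intro tendsto_diff)
qed

lemma sm_Un:
  assumes "is_smeasure \<mu>" "A \<in> sets borel" "B \<in> sets borel" "A \<inter> B = {}"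
  shows "sm \<mu> (A \<union> B) = sm \<mu> A + sm \<mu> B"
  using assms finite_measure.finite_measure_Union[of "fst \<mu>" A B]
    finite_measure.finite_measure_Union[of "snd \<mu>" A B]
    finite_borel_measure.sets_M[OF finite_borel_measure_components(1)]
    finite_borel_measure.sets_M[OF finite_borel_measure_components(2)]
    finite_borel_measure_components[of \<mu>]
  unfolding sm_def finite_borel_measure_def by simp

lemma sm_Ioc_split:
  assumes "is_smeasure \<nu>" "a \<le> b" "b \<le> c"
  shows "sm \<nu> {a<..c} = sm \<nu> {a<..b} + sm \<nu> {b<..c}"
proof -
  have "sm \<nu> ({a<..b} \<union> {b<..c}) = sm \<nu> {a<..b} + sm \<nu> {b<..c}"
    by (rule sm_Un[OF assms(1)]) auto
  moreover have "{a<..b} \<union> {b<..c} = {a<..c}" using assms(2,3) by auto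
  ultimately show ?thesis by simp
qed

lemma sm_Iic_split:
  assumes "is_smeasure \<nu>" "b \<le> c"
  shows "sm \<nu> {..c} = sm \<nu> {..b} + sm \<nu> {b<..c}"
proof -
  have "sm \<nu> ({..b} \<union> {b<..c}) = sm \<nu> {..b} + sm \<nu> {b<..c}"
    by (rule sm_Un[OF assms(1)]) auto
  moreover have "{..b} \<union> {b<..c} = {..c}" using assms(2) by auto
  ultimately show ?thesis by simp
qed

lemma sm_Ioi_split:
  assumes "is_smeasure \<nu>" "a \<le> b"
  shows "sm \<nu> {a<..} = sm \<nu> {a<..b} + sm \<nu> {b<..}"
proof -
  have "sm \<nu> ({a<..b} \<union> {b<..}) = sm \<nu> {a<..b} + sm \<nu> {b<..}"
    by (rule sm_Un[OF assms(1)]) auto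
  moreover have "{a<..b} \<union> {b<..} = {a<..}" using assms(2) by auto
  ultimately show ?thesis by simp
qed

lemma sm_Ioc_eq_Fdist_diff:
  assumes \<nu>: "is_smeasure \<nu>" and "a \<le> b"
  shows "sm \<nu> {a<..b} = Fdist \<alpha> \<nu> b - Fdist \<alpha> \<nu> a"
proof (cases \<alpha>)
  case (real r)
  consider "r \<le> a" | "a < r" "r \<le> b" | "b < r" by linarith
  then show ?thesis
  proof cases
    case 1
    then show ?thesis using sm_Ioc_split[OF \<nu> 1 \<open>a \<le> b\<close>] \<open>a \<le> b\<close> by (simp add: Fdist_def real)
  next
    case 2
    then show ?thesis using sm_Ioc_split[OF \<nu>, of a r b] by (simp add: Fdist_def real)
  next
    case 3
    then show ?thesis using sm_Ioc_split[OF \<nu> \<open>a \<le> b\<close>, of r] \<open>a \<le> b\<close> by (simp add: Fdist_def real)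
  qed
next
  case PInf
  then show ?thesis using sm_Ioi_split[OF assms] by (simp add: Fdist_def)
next
  case MInf
  then show ?thesis using sm_Iic_split[OF assms] by (simp add: Fdist_def)
qed

lemma sm_Iic_tendsto_at_bot:
  assumes "is_smeasure \<mu>"
  shows "((\<lambda>c. sm \<mu> {..c}) \<longlongrightarrow> 0) at_bot"
  using finite_borel_measure.cdf_lim_at_bot[OF finite_borel_measure_components(1)[OF assms]]
    finite_borel_measure.cdf_lim_at_bot[OF finite_borel_measure_components(2)[OF assms]]
  unfolding sm_def cdf_def by (auto intro: tendsto_eq_intros)

lemma sm_Ioi_tendsto_at_top:
  assumes "is_smeasure \<mu>"
  shows "((\<lambda>c. sm \<mu> {c<..}) \<longlongrightarrow> 0) at_top"
proof -
  have "((\<lambda>c. measure M {c<..}) \<longlongrightarrow> 0) at_top" if "finite_borel_measure M" for M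
  proof -
    interpret finite_borel_measure M by fact
    have "measure M {c<..} = measure M (space M) - cdf M c" for c
      using finite_measure_compl[OF sets_M[of "{..c}"]]
      by (simp add: borel_UNIV cdf_def Compl_eq_Diff_UNIV[symmetric])
    then show ?thesis
      using cdf_lim_at_top by (auto intro: tendsto_eq_intros)
  qed
  from this[OF finite_borel_measure_components(1)[OF assms]]
    this[OF finite_borel_measure_components(2)[OF assms]]
  show ?thesis unfolding sm_def by (auto intro: tendsto_eq_intros)
qed

section \<open>Bounds by the variation\<close>

lemma var_bdd_above:
  assumes "is_smeasure \<mu>"
  shows "bdd_above {(\<Sum>B\<in>P. \<bar>sm \<mu> B\<bar>) | P. finite P \<and> P \<subseteq> sets borel \<and> disjoint P \<and> \<Union>P = A}"
proof (rule bdd_aboveI, safe)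
  fix P :: "real set set" assume P: "finite P" "P \<subseteq> sets borel" "disjoint P"
  have "(\<Sum>B\<in>P. measure M B) \<le> measure M UNIV" if "finite_borel_measure M" for M
  proof -
    interpret finite_borel_measure M by fact
    have "(\<Sum>B\<in>P. measure M B) = measure M (\<Union>P)"
      using P by (intro finite_measure_finite_Union[symmetric, where A=id, simplified])
        (auto simp: disjoint_def disjoint_family_on_def)
    also have "\<dots> \<le> measure M UNIV"
      using P by (intro finite_measure_mono) auto
    finally show ?thesis .
  qed
  from this[OF finite_borel_measure_components(1)[OF assms]]
    this[OF finite_borel_measure_components(2)[OF assms]]
  have "(\<Sum>B\<in>P. measure (fst \<mu>) B + measure (snd \<mu>) B) \<le> measure (fst \<mu>) UNIV + measure (snd \<mu>) UNIV"
    by (simp add: sum.distrib)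
  moreover have "(\<Sum>B\<in>P. \<bar>sm \<mu> B\<bar>) \<le> (\<Sum>B\<in>P. measure (fst \<mu>) B + measure (snd \<mu>) B)"
    unfolding sm_def by (intro sum_mono) (simp add: abs_le_iff)
  ultimately show "(\<Sum>B\<in>P. \<bar>sm \<mu> B\<bar>) \<le> measure (fst \<mu>) UNIV + measure (snd \<mu>) UNIV"
    by linarith
qed

lemma sum_abs_sm_le_var:
  assumes "is_smeasure \<mu>" "finite J" "\<And>j. j \<in> J \<Longrightarrow> B j \<in> sets borel"
    "disjoint_family_on B J" "(\<Union>j\<in>J. B j) = K"
  shows "(\<Sum>j\<in>J. \<bar>sm \<mu> (B j)\<bar>) \<le> var \<mu> K"
proof -
  have "(\<Sum>j\<in>J. \<bar>sm \<mu> (B j)\<bar>) = (\<Sum>A\<in>B ` J. \<bar>sm \<mu> A\<bar>)"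
  proof (rule sum.reindex_nontrivial[symmetric, unfolded o_def])
    fix i j assume "i \<in> J" "j \<in> J" "i \<noteq> j" "B i = B j"
    with assms(4) have "B i = {}" by (auto simp: disjoint_family_on_def)
    then show "\<bar>sm \<mu> (B i)\<bar> = 0" by (simp add: sm_def)
  qed fact
  also have "\<dots> \<le> var \<mu> K"
    unfolding var_def using assms
    by (intro cSup_upper var_bdd_above) (auto intro!: disjoint_family_on_disjoint_image)
  finally show ?thesis .
qed

lemma var_nonneg:
  assumes "is_smeasure \<mu>" "A \<in> sets borel"
  shows "0 \<le> var \<mu> A"
  using sum_abs_sm_le_var[OF assms(1), of "{()}" "\<lambda>_. A" A] assms(2)
  by (simp add: disjoint_family_on_def)

lemma abs_sint_step_le_var:
  assumes "is_smeasure \<mu>" "finite J" "\<And>j. j \<in> J \<Longrightarrow> B j \<in> sets borel"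
    "disjoint_family_on B J" "(\<Union>j\<in>J. B j) = K"
    "\<And>j. j \<in> J \<Longrightarrow> B j \<noteq> {} \<Longrightarrow> \<bar>y j\<bar> \<le> C" "0 \<le> C"
  shows "\<bar>sint \<mu> (\<lambda>x. \<Sum>j\<in>J. y j * indicator (B j) x)\<bar> \<le> C * var \<mu> K"
proof -
  have "\<bar>sint \<mu> (\<lambda>x. \<Sum>j\<in>J. y j * indicator (B j) x)\<bar> \<le> (\<Sum>j\<in>J. \<bar>y j\<bar> * \<bar>sm \<mu> (B j)\<bar>)"
    using sint_step[OF assms(1-3)] sum_abs[of "\<lambda>j. y j * sm \<mu> (B j)" J] by (simp add: abs_mult)
  also have "\<dots> \<le> (\<Sum>j\<in>J. C * \<bar>sm \<mu> (B j)\<bar>)"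
    using assms(6) by (intro sum_mono) (force simp: sm_def intro: mult_right_mono)
  also have "\<dots> \<le> C * var \<mu> K"
    using sum_abs_sm_le_var[OF assms(1-5)] assms(7)
    by (simp add: sum_distrib_left[symmetric] mult_left_mono)
  finally show ?thesis .
qed

definition quantize :: "nat \<Rightarrow> (real \<Rightarrow> real) \<Rightarrow> real \<Rightarrow> real" where
  "quantize m h x = of_int \<lfloor>real m * h x\<rfloor> / real m"

lemma abs_sub_quantize_le:
  assumes "0 < m"
  shows "\<bar>h x - quantize m h x\<bar> \<le> 1 / m"
proof -
  have "\<bar>h x - quantize m h x\<bar> = \<bar>real m * h x - of_int \<lfloor>real m * h x\<rfloor>\<bar> / m"
    using assms unfolding quantize_def by (simp add: field_simps abs_divide)
  also have "\<dots> \<le> 1 / m"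
    by (intro divide_right_mono) linarith+
  finally show ?thesis .
qed

lemma abs_quantize_le:
  assumes "0 < m" "\<And>x. \<bar>h x\<bar> \<le> c"
  shows "\<bar>quantize m h x\<bar> \<le> c + 1 / m"
  using abs_sub_quantize_le[OF assms(1), of h x] assms(2)[of x] by linarith

lemma abs_sint_quantize_le_var:
  fixes m :: nat
  assumes \<mu>: "is_smeasure \<mu>" and K: "K \<in> sets borel" and h: "h \<in> borel_measurable borel"
    and bound: "\<And>x. \<bar>h x\<bar> \<le> c" and supp: "\<And>x. x \<notin> K \<Longrightarrow> h x = 0" and m: "0 < m"
  shows "\<bar>sint \<mu> (quantize m h)\<bar> \<le> (c + 1 / m) * var \<mu> K"
proof -
  define N where "N = \<lceil>real m * c\<rceil> + 1"
  define B where "B j = {x\<in>K. \<lfloor>real m * h x\<rfloor> = j}" for j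
  have level_range: "\<lfloor>real m * h x\<rfloor> \<in> {-N..N}" for x
    using abs_quantize_le[where h=h, OF m bound, where x=x] m
    unfolding N_def quantize_def by (simp add: field_simps abs_le_iff) linarith
  have "quantize m h x = (\<Sum>j\<in>{-N..N}. (of_int j / m) * indicator (B j) x)" for x
  proof (cases "x \<in> K")
    case True
    have "(\<Sum>j\<in>{-N..N}. (of_int j / m) * indicator (B j) x)
        = (\<Sum>j\<in>{-N..N}. if j = \<lfloor>real m * h x\<rfloor> then of_int j / m else 0)"
      unfolding B_def using True by (intro sum.cong) auto
    then show ?thesis using level_range[of x] unfolding quantize_def by simp
  qed (simp add: quantize_def B_def supp)
  then have q_eq: "quantize m h = (\<lambda>x. \<Sum>j\<in>{-N..N}. (of_int j / m) * indicator (B j) x)" ..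
  show ?thesis
    unfolding q_eq
  proof (rule abs_sint_step_le_var[OF \<mu>])
    show "B j \<in> sets borel" for j
      unfolding B_def using K h by measurable
    show "disjoint_family_on B {-N..N}"
      unfolding B_def disjoint_family_on_def by auto
    show "(\<Union>j\<in>{-N..N}. B j) = K"
      using level_range unfolding B_def by blast
    show "\<bar>of_int j / real m\<bar> \<le> c + 1 / m" if "B j \<noteq> {}" for j
      using that abs_quantize_le[where h=h, OF m bound] unfolding B_def quantize_def by blast
    show "0 \<le> c + 1 / m" using bound[of 0] by simp
  qed simp
qed

lemma abs_sint_le_var:
  assumes \<mu>: "is_smeasure \<mu>" and K: "K \<in> sets borel" and h: "h \<in> borel_measurable borel"
    and bound: "\<And>x. \<bar>h x\<bar> \<le> c" and supp: "\<And>x. x \<notin> K \<Longrightarrow> h x = 0"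
  shows "\<bar>sint \<mu> h\<bar> \<le> c * var \<mu> K"
proof (rule LIMSEQ_le_const)
  define T where "T = measure (fst \<mu>) UNIV + measure (snd \<mu>) UNIV"
  show "(\<lambda>m. (c + 1 / real m) * var \<mu> K + T / real m) \<longlonglongrightarrow> c * var \<mu> K"
    by (auto intro!: tendsto_eq_intros lim_const_over_n)
  have "\<bar>sint \<mu> h\<bar> \<le> (c + 1 / m) * var \<mu> K + T / m" if m: "0 < m" for m :: nat
  proof -
    have q: "quantize m h \<in> borel_measurable borel"
      unfolding quantize_def using h by measurable
    have "bounded_borel h"
      using h bound unfolding bounded_borel_def by blast
    moreover have "bounded_borel (quantize m h)"
      using q abs_quantize_le[where h=h, OF m bound] unfolding bounded_borel_def by blast
    ultimately
    have "\<bar>sint \<mu> h - sint \<mu> (quantize m h)\<bar> = \<bar>sint \<mu> (\<lambda>x. h x - quantize m h x)\<bar>"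
      by (simp add: sint_diff[OF \<mu>])
    also have "\<dots> \<le> 1 / m * T"
      unfolding T_def using h q abs_sub_quantize_le[OF m]
      by (intro abs_sint_le_total_mass[OF \<mu>]) auto
    finally show ?thesis
      using abs_sint_quantize_le_var[OF assms m] by simp
  qed
  then show "\<exists>N. \<forall>m\<ge>N. \<bar>sint \<mu> h\<bar> \<le> (c + 1 / real m) * var \<mu> K + T / real m"
    by (intro exI[of _ 1]) auto
qed

lemma abs_sm_le_var:
  assumes "is_smeasure \<mu>" "A \<in> sets borel" "B \<in> sets borel" "B \<subseteq> A"
  shows "\<bar>sm \<mu> B\<bar> \<le> var \<mu> A"
  using abs_sint_le_var[OF assms(1,2), of "indicator B" 1] assms
  by (auto simp: sint_indicator indicator_def)

lemma abs_sint_diff_le_var: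
  assumes \<nu>: "is_smeasure \<nu>" and "L \<in> sets borel" and f: "bounded_borel f" and g: "bounded_borel g"
    and "\<And>x. \<bar>f x - g x\<bar> \<le> \<eta>" and "\<And>x. x \<notin> L \<Longrightarrow> f x = g x"
  shows "\<bar>sint \<nu> f - sint \<nu> g\<bar> \<le> \<eta> * var \<nu> L"
proof -
  have "\<bar>sint \<nu> (\<lambda>x. f x - g x)\<bar> \<le> \<eta> * var \<nu> L"
    using assms f g unfolding bounded_borel_def
    by (intro abs_sint_le_var[OF \<nu>]) (auto intro: borel_measurable_diff)
  then show ?thesis by (simp add: sint_diff[OF \<nu> f g])
qed

text \<open>The cut point \<open>c\<close> replaces subadditivity of \<open>var\<close>, which is not available.\<close>
lemma abs_sint_le_var_add_var:
  assumes \<nu>: "is_smeasure \<nu>" and A: "A \<in> sets borel" and B: "B \<in> sets borel"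
    and h: "h \<in> borel_measurable borel" and bound: "\<And>x. \<bar>h x\<bar> \<le> 1"
    and left: "\<And>x. x \<le> c \<Longrightarrow> x \<notin> A \<Longrightarrow> h x = 0" and right: "\<And>x. c < x \<Longrightarrow> x \<notin> B \<Longrightarrow> h x = 0"
  shows "\<bar>sint \<nu> h\<bar> \<le> var \<nu> A + var \<nu> B"
proof -
  define hA where "hA x = indicator {..c} x * h x" for x
  define hB where "hB x = indicator {c<..} x * h x" for x
  have borel: "hA \<in> borel_measurable borel" "hB \<in> borel_measurable borel"
    unfolding hA_def hB_def using h by measurable
  have bounds: "\<bar>hA x\<bar> \<le> 1" "\<bar>hB x\<bar> \<le> 1" for x
    using bound[of x] unfolding hA_def hB_def by (auto simp: indicator_def)
  have "h = (\<lambda>x. hA x + hB x)"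
    unfolding hA_def hB_def by (auto simp: indicator_def)
  moreover have "bounded_borel hA" "bounded_borel hB"
    using borel bounds unfolding bounded_borel_def by blast+
  ultimately have "sint \<nu> h = sint \<nu> hA + sint \<nu> hB"
    by (simp add: sint_add[OF \<nu>])
  moreover have "\<bar>sint \<nu> hA\<bar> \<le> 1 * var \<nu> A"
    using left
    by (intro abs_sint_le_var[OF \<nu> A borel(1) bounds(1)]) (auto simp: hA_def indicator_def)
  moreover have "\<bar>sint \<nu> hB\<bar> \<le> 1 * var \<nu> B"
    using right
    by (intro abs_sint_le_var[OF \<nu> B borel(2) bounds(2)]) (auto simp: hB_def indicator_def)
  ultimately show ?thesis by linarith
qed

lemma countable_atoms:
  assumes "is_smeasure \<mu>"
  shows "countable {x. \<not> cont_point \<mu> x}"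
proof -
  have "countable ({x. measure (fst \<mu>) {x} > 0} \<union> {x. measure (snd \<mu>) {x} > 0})"
    using finite_borel_measure.countable_atoms finite_borel_measure_components[OF assms] by blast
  then show ?thesis
    by (rule countable_subset[rotated]) (auto simp: cont_point_def sm_def less_le)
qed

lemma cont_point_between:
  assumes "is_smeasure \<mu>" "u < v"
  obtains x where "u < x" "x < v" "cont_point \<mu> x"
proof -
  have "\<not> {u<..<v} \<subseteq> {x. \<not> cont_point \<mu> x}"
    using countable_subset[OF _ countable_atoms[OF assms(1)]] uncountable_open_interval assms(2)
    by blast
  then show ?thesis using that by auto
qed

lemma cont_point_grid:
  assumes "is_smeasure \<mu>" "0 < h"
  obtains s where "0 < s" "s < h" "\<And>i::int. cont_point \<mu> (s + of_int i * h)"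
proof -
  define bad where "bad = (\<Union>i::int. (\<lambda>x. x - of_int i * h) ` {x. \<not> cont_point \<mu> x})"
  have "countable bad"
    unfolding bad_def using countable_atoms[OF assms(1)] by auto
  then have "\<not> {0<..<h} \<subseteq> bad"
    using countable_subset uncountable_open_interval assms(2) by blast
  then obtain s where "0 < s" "s < h" "s \<notin> bad" by (auto simp: subset_iff)
  moreover have "cont_point \<mu> (s + of_int i * h)" if "s \<notin> bad" for i :: int
    using that unfolding bad_def by (auto simp: image_iff) (metis add_diff_cancel_right')
  ultimately show ?thesis using that by blast
qed

section \<open>Convergence on intervals from vague convergence\<close>

lemma LIMSEQ_by_approximation:
  fixes x :: "nat \<Rightarrow> real"
  assumes "\<And>e. 0 < e \<Longrightarrow>
    \<exists>v w. v \<longlonglongrightarrow> w \<and> (\<forall>\<^sub>F n in sequentially. \<bar>x n - v n\<bar> \<le> e) \<and> \<bar>l - w\<bar> \<le> e"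
  shows "x \<longlonglongrightarrow> l"
  unfolding tendsto_iff dist_real_def
proof (intro allI impI)
  fix r :: real assume "0 < r"
  then obtain v w where v: "v \<longlonglongrightarrow> w" and close: "\<forall>\<^sub>F n in sequentially. \<bar>x n - v n\<bar> \<le> r / 4"
    and w: "\<bar>l - w\<bar> \<le> r / 4"
    using assms[of "r / 4"] by auto
  have "0 < r / 4" using \<open>0 < r\<close> by simp
  from v[unfolded tendsto_iff dist_real_def, rule_format, OF this]
  have "\<forall>\<^sub>F n in sequentially. \<bar>v n - w\<bar> < r / 4" .
  with close show "\<forall>\<^sub>F n in sequentially. \<bar>x n - l\<bar> < r"
    by eventually_elim (use w \<open>0 < r\<close> in linarith)
qed

lemma eventually_less_if_limsup_le:
  assumes "limsup (\<lambda>n. ereal (f n)) \<le> ereal c" "c < e"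
  shows "\<forall>\<^sub>F n in sequentially. f n < e"
proof -
  have "limsup (\<lambda>n. ereal (f n)) < ereal e"
    by (rule order.strict_trans1[OF assms(1)]) (simp add: assms(2))
  then show ?thesis by (auto dest: Limsup_lessD elim: eventually_mono)
qed

lemma no_mass_atE:
  assumes "no_mass_at \<mu>s x" "0 < e"
  obtains N d where "N \<in> sets borel" "0 < d" "ball x d \<subseteq> N"
    "\<forall>\<^sub>F n in sequentially. var (\<mu>s n) N < e"
proof -
  obtain N where N: "open N" "x \<in> N" "limsup (\<lambda>n. ereal (var (\<mu>s n) N)) \<le> ereal (e / 2)"
    using assms unfolding no_mass_at_def by (meson half_gt_zero)
  moreover obtain d where "0 < d" "ball x d \<subseteq> N"
    using N(1,2) open_contains_ball by blast
  moreover have "\<forall>\<^sub>F n in sequentially. var (\<mu>s n) N < e"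
    by (rule eventually_less_if_limsup_le[OF N(3)]) (use assms(2) in simp)
  ultimately show ?thesis
    using that borel_open by blast
qed

lemma no_mass_at_minfE:
  assumes "no_mass_at_minf \<mu>s" "0 < e"
  obtains c where "\<forall>\<^sub>F n in sequentially. var (\<mu>s n) {..<c} < e"
proof -
  obtain c where "limsup (\<lambda>n. ereal (var (\<mu>s n) {..<c})) \<le> ereal (e / 2)"
    using assms unfolding no_mass_at_minf_def by (meson half_gt_zero)
  then have "\<forall>\<^sub>F n in sequentially. var (\<mu>s n) {..<c} < e"
    by (rule eventually_less_if_limsup_le) (use assms(2) in simp)
  then show ?thesis by (rule that)
qed

lemma no_mass_at_pinfE:
  assumes "no_mass_at_pinf \<mu>s" "0 < e"
  obtains c where "\<forall>\<^sub>F n in sequentially. var (\<mu>s n) {c<..} < e"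
proof -
  obtain c where "limsup (\<lambda>n. ereal (var (\<mu>s n) {c<..})) \<le> ereal (e / 2)"
    using assms unfolding no_mass_at_pinf_def by (meson half_gt_zero)
  then have "\<forall>\<^sub>F n in sequentially. var (\<mu>s n) {c<..} < e"
    by (rule eventually_less_if_limsup_le) (use assms(2) in simp)
  then show ?thesis by (rule that)
qed

definition plateau :: "real \<Rightarrow> real \<Rightarrow> real \<Rightarrow> real \<Rightarrow> real" where
  "plateau a b d x = max 0 (min 1 (1 - max (a - x) (x - b) / d))"

lemma plateau_bounds: "0 \<le> plateau a b d x" "plateau a b d x \<le> 1"
  unfolding plateau_def by auto

lemma plateau_eq_1: "0 < d \<Longrightarrow> a \<le> x \<Longrightarrow> x \<le> b \<Longrightarrow> plateau a b d x = 1"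
  unfolding plateau_def by (simp add: divide_nonpos_pos)

lemma plateau_eq_0: "0 < d \<Longrightarrow> x \<le> a - d \<or> b + d \<le> x \<Longrightarrow> plateau a b d x = 0"
  unfolding plateau_def by (auto simp: le_divide_eq max_def)

lemma continuous_plateau: "0 < d \<Longrightarrow> continuous_on UNIV (plateau a b d)"
  unfolding plateau_def[abs_def] by (intro continuous_intros) auto

lemma borel_measurable_plateau: "0 < d \<Longrightarrow> plateau a b d \<in> borel_measurable borel"
  by (rule borel_measurable_continuous_onI[OF continuous_plateau])

lemma plateau_tendsto_indicator:
  assumes "0 < d"
  shows "(\<lambda>k. plateau a b (d / Suc k) x) \<longlonglongrightarrow> indicator {a..b} x"
proof -
  have small: "\<forall>\<^sub>F k in sequentially. d / Suc k < r" if "0 < r" for r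
    using that assms by (intro order_tendstoD(2)[OF lim_const_over_n[THEN LIMSEQ_Suc]])
  consider "x < a" | "a \<le> x" "x \<le> b" | "b < x" by linarith
  then have "\<forall>\<^sub>F k in sequentially. plateau a b (d / Suc k) x = indicator {a..b} x"
  proof cases
    case 1
    have "\<forall>\<^sub>F k in sequentially. d / Suc k < a - x"
      using 1 by (intro small) simp
    then show ?thesis
      by eventually_elim (use 1 assms in \<open>auto intro!: plateau_eq_0\<close>)
  next
    case 2
    then show ?thesis using assms by (auto intro!: always_eventually plateau_eq_1)
  next
    case 3
    have "\<forall>\<^sub>F k in sequentially. d / Suc k < x - b"
      using 3 by (intro small) simp
    then show ?thesis
      by eventually_elim (use 3 assms in \<open>auto intro!: plateau_eq_0\<close>)
  qed
  then show ?thesis by (rule tendsto_eventually)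
qed

lemma sint_plateau_tendsto:
  assumes "is_smeasure \<mu>" "cont_point \<mu> a" "0 < d"
  shows "(\<lambda>k. sint \<mu> (plateau a b (d / Suc k))) \<longlonglongrightarrow> sm \<mu> {a<..b}"
proof -
  have "(\<lambda>k. sint \<mu> (plateau a b (d / Suc k))) \<longlonglongrightarrow> sint \<mu> (indicator {a..b})"
    using assms(3) plateau_bounds
    by (intro sint_tendsto_dominated[OF assms(1)] plateau_tendsto_indicator
        borel_measurable_plateau) auto
  moreover have "sm \<mu> {a..b} = sm \<mu> {a<..b}"
  proof (cases "a \<le> b")
    case True
    then have "{a..b} = {a} \<union> {a<..b}" by auto
    then show ?thesis
      using sm_Un[OF assms(1), of "{a}" "{a<..b}"] assms(2) by (simp add: cont_point_def)
  qed simp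
  ultimately show ?thesis by (simp add: sint_indicator[OF assms(1)])
qed

lemma abs_sint_plateau_diff_le_var:
  assumes \<nu>: "is_smeasure \<nu>" and "0 < d" "a \<le> b"
    and A: "A \<in> sets borel" "ball a d \<subseteq> A" and B: "B \<in> sets borel" "ball b d \<subseteq> B"
  shows "\<bar>sint \<nu> (plateau a b d) - sm \<nu> {a<..b}\<bar> \<le> var \<nu> A + var \<nu> B"
proof -
  define D where "D x = plateau a b d x - indicator {a<..b} x" for x
  have "bounded_borel (plateau a b d)"
    using borel_measurable_plateau[OF \<open>0 < d\<close>] plateau_bounds
    unfolding bounded_borel_def by (intro conjI exI[of _ 1]) auto
  then have "sint \<nu> (plateau a b d) - sm \<nu> {a<..b} = sint \<nu> D"
    unfolding D_def by (simp add: sint_diff[OF \<nu> _ bounded_borel_indicator] sint_indicator[OF \<nu>])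
  also have "\<bar>sint \<nu> D\<bar> \<le> var \<nu> A + var \<nu> B"
  proof (rule abs_sint_le_var_add_var[OF \<nu> A(1) B(1), where c=a])
    show "D \<in> borel_measurable borel"
      unfolding D_def using borel_measurable_plateau[OF \<open>0 < d\<close>] by measurable
    show "\<bar>D x\<bar> \<le> 1" for x
      using plateau_bounds[of a b d x] unfolding D_def by (auto simp: indicator_def)
    show "D x = 0" if "x \<le> a" "x \<notin> A" for x
    proof -
      have "\<not> dist a x < d" using that(2) A(2) by auto
      with that(1) have "x \<le> a - d" by (simp add: dist_real_def)
      then show ?thesis using plateau_eq_0[OF \<open>0 < d\<close>] \<open>0 < d\<close> by (simp add: D_def)
    qed
    show "D x = 0" if "a < x" "x \<notin> B" for x
    proof (cases "b < x")
      case True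
      have "\<not> dist b x < d" using that(2) B(2) by auto
      with True have "b + d \<le> x" by (simp add: dist_real_def)
      then show ?thesis using plateau_eq_0[OF \<open>0 < d\<close>] True by (simp add: D_def)
    qed (use that plateau_eq_1[OF \<open>0 < d\<close>, of a x b] in \<open>simp add: D_def\<close>)
  qed
  finally show ?thesis .
qed

lemma sm_Ioc_tendsto_if_no_mass:
  assumes ms: "\<And>n. is_smeasure (\<mu>s n)" and \<mu>: "is_smeasure \<mu>" and vc: "vague_conv \<mu>s \<mu>"
    and a: "cont_point \<mu> a" and "a \<le> b" and mass: "no_mass_at \<mu>s a" "no_mass_at \<mu>s b"
  shows "(\<lambda>n. sm (\<mu>s n) {a<..b}) \<longlonglongrightarrow> sm \<mu> {a<..b}"
proof (rule LIMSEQ_by_approximation)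
  fix e :: real assume "0 < e"
  then have "0 < e / 2" by simp
  obtain A da where A: "A \<in> sets borel" "0 < da" "ball a da \<subseteq> A"
    and small_A: "\<forall>\<^sub>F n in sequentially. var (\<mu>s n) A < e / 2"
    using no_mass_atE[OF mass(1) \<open>0 < e / 2\<close>] by blast
  obtain B db where B: "B \<in> sets borel" "0 < db" "ball b db \<subseteq> B"
    and small_B: "\<forall>\<^sub>F n in sequentially. var (\<mu>s n) B < e / 2"
    using no_mass_atE[OF mass(2) \<open>0 < e / 2\<close>] by blast
  define d0 where "d0 = min da db"
  have "0 < d0" unfolding d0_def using A B by simp
  from sint_plateau_tendsto[OF \<mu> a this, of b, unfolded tendsto_iff dist_real_def, rule_format,
      OF \<open>0 < e\<close>]
  obtain k where k: "\<bar>sint \<mu> (plateau a b (d0 / Suc k)) - sm \<mu> {a<..b}\<bar> < e"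
    by (auto simp: eventually_sequentially)
  define d where "d = d0 / Suc k"
  have "0 < d" "d \<le> d0"
    using \<open>0 < d0\<close> unfolding d_def by (auto intro: divide_left_mono[of 1, simplified])
  then have "0 < d" "ball a d \<subseteq> A" "ball b d \<subseteq> B"
    using A(3) B(3) subset_ball[of d da a] subset_ball[of d db b] unfolding d0_def by auto
  note plateau_error = abs_sint_plateau_diff_le_var[OF _ this(1) \<open>a \<le> b\<close> A(1) this(2) B(1) this(3)]
  have "\<forall>x. x \<notin> {a - d..b + d} \<longrightarrow> plateau a b d x = 0"
    using plateau_eq_0[OF \<open>0 < d\<close>] by force
  then have "(\<lambda>n. sint (\<mu>s n) (plateau a b d)) \<longlonglongrightarrow> sint \<mu> (plateau a b d)"
    using vc continuous_plateau[OF \<open>0 < d\<close>] unfolding vague_conv_def by blast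
  moreover have "\<forall>\<^sub>F n in sequentially. \<bar>sm (\<mu>s n) {a<..b} - sint (\<mu>s n) (plateau a b d)\<bar> \<le> e"
    using small_A small_B
  proof eventually_elim
    case (elim n)
    then show ?case using plateau_error[OF ms, of n] by (simp add: abs_minus_commute)
  qed
  moreover have "\<bar>sm \<mu> {a<..b} - sint \<mu> (plateau a b d)\<bar> \<le> e"
    using k unfolding d_def by (simp add: abs_minus_commute)
  ultimately show "\<exists>v w. v \<longlonglongrightarrow> w \<and> (\<forall>\<^sub>F n in sequentially. \<bar>sm (\<mu>s n) {a<..b} - v n\<bar> \<le> e)
      \<and> \<bar>sm \<mu> {a<..b} - w\<bar> \<le> e"
    by (intro exI[of _ "\<lambda>n. sint (\<mu>s n) (plateau a b d)"] exI[of _ "sint \<mu> (plateau a b d)"] conjI)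
qed

lemma Fconv_real_if_vague_conv:
  assumes ms: "\<And>n. is_smeasure (\<mu>s n)" and \<mu>: "is_smeasure \<mu>" and vc: "vague_conv \<mu>s \<mu>"
    and \<alpha>: "cont_point \<mu> \<alpha>" and mass: "\<forall>x. cont_point \<mu> x \<longrightarrow> no_mass_at \<mu>s x"
  shows "Fconv (ereal \<alpha>) \<mu>s \<mu>"
  unfolding Fconv_def
proof (intro allI impI)
  fix x assume x: "cont_point \<mu> x"
  show "(\<lambda>n. Fdist (ereal \<alpha>) (\<mu>s n) x) \<longlonglongrightarrow> Fdist (ereal \<alpha>) \<mu> x"
  proof (cases "\<alpha> \<le> x")
    case True
    then show ?thesis
      using sm_Ioc_tendsto_if_no_mass[OF ms \<mu> vc \<alpha> True] mass \<alpha> x by (simp add: Fdist_def)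
  next
    case False
    then show ?thesis
      using sm_Ioc_tendsto_if_no_mass[OF ms \<mu> vc x, of \<alpha>] mass \<alpha> x
      by (simp add: Fdist_def tendsto_minus)
  qed
qed

lemma Fconv_minf_if_vague_conv:
  assumes ms: "\<And>n. is_smeasure (\<mu>s n)" and \<mu>: "is_smeasure \<mu>" and vc: "vague_conv \<mu>s \<mu>"
    and tail: "no_mass_at_minf \<mu>s" and mass: "\<forall>x. cont_point \<mu> x \<longrightarrow> no_mass_at \<mu>s x"
  shows "Fconv (-\<infinity>) \<mu>s \<mu>"
  unfolding Fconv_def
proof (intro allI impI)
  fix x assume x: "cont_point \<mu> x"
  have "(\<lambda>n. sm (\<mu>s n) {..x}) \<longlonglongrightarrow> sm \<mu> {..x}"
  proof (rule LIMSEQ_by_approximation)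
    fix e :: real assume "0 < e"
    obtain c0 where c0: "\<forall>\<^sub>F n in sequentially. var (\<mu>s n) {..<c0} < e"
      using no_mass_at_minfE[OF tail \<open>0 < e\<close>] .
    from sm_Iic_tendsto_at_bot[OF \<mu>, unfolded tendsto_iff dist_real_def, rule_format, OF \<open>0 < e\<close>]
    obtain R where R: "\<And>c. c \<le> R \<Longrightarrow> \<bar>sm \<mu> {..c}\<bar> < e"
      by (auto simp: eventually_at_bot_linorder)
    define L where "L = min c0 (min R x)"
    obtain c where "c < L" "cont_point \<mu> c"
      using cont_point_between[OF \<mu>, of "L - 1" L] by auto
    then have c: "c < c0" "c < R" "c < x" "cont_point \<mu> c" unfolding L_def by auto
    have "(\<lambda>n. sm (\<mu>s n) {c<..x}) \<longlonglongrightarrow> sm \<mu> {c<..x}"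
      using c x mass by (intro sm_Ioc_tendsto_if_no_mass[OF ms \<mu> vc]) auto
    moreover have "\<forall>\<^sub>F n in sequentially. \<bar>sm (\<mu>s n) {..x} - sm (\<mu>s n) {c<..x}\<bar> \<le> e"
      using c0
    proof eventually_elim
      case (elim n)
      have "\<bar>sm (\<mu>s n) {..c}\<bar> \<le> var (\<mu>s n) {..<c0}"
        using c by (intro abs_sm_le_var[OF ms]) auto
      with elim show ?case using sm_Iic_split[OF ms, of c x] c by simp
    qed
    moreover have "\<bar>sm \<mu> {..x} - sm \<mu> {c<..x}\<bar> \<le> e"
      using sm_Iic_split[OF \<mu>, of c x] R[of c] c by simp
    ultimately show "\<exists>v w. v \<longlonglongrightarrow> w \<and> (\<forall>\<^sub>F n in sequentially. \<bar>sm (\<mu>s n) {..x} - v n\<bar> \<le> e)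
        \<and> \<bar>sm \<mu> {..x} - w\<bar> \<le> e"
      by (intro exI[of _ "\<lambda>n. sm (\<mu>s n) {c<..x}"] exI[of _ "sm \<mu> {c<..x}"] conjI)
  qed
  then show "(\<lambda>n. Fdist (-\<infinity>) (\<mu>s n) x) \<longlonglongrightarrow> Fdist (-\<infinity>) \<mu> x"
    by (simp add: Fdist_def)
qed

lemma Fconv_pinf_if_vague_conv:
  assumes ms: "\<And>n. is_smeasure (\<mu>s n)" and \<mu>: "is_smeasure \<mu>" and vc: "vague_conv \<mu>s \<mu>"
    and tail: "no_mass_at_pinf \<mu>s" and mass: "\<forall>x. cont_point \<mu> x \<longrightarrow> no_mass_at \<mu>s x"
  shows "Fconv \<infinity> \<mu>s \<mu>"
  unfolding Fconv_def
proof (intro allI impI)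
  fix x assume x: "cont_point \<mu> x"
  have "(\<lambda>n. sm (\<mu>s n) {x<..}) \<longlonglongrightarrow> sm \<mu> {x<..}"
  proof (rule LIMSEQ_by_approximation)
    fix e :: real assume "0 < e"
    obtain c0 where c0: "\<forall>\<^sub>F n in sequentially. var (\<mu>s n) {c0<..} < e"
      using no_mass_at_pinfE[OF tail \<open>0 < e\<close>] .
    from sm_Ioi_tendsto_at_top[OF \<mu>, unfolded tendsto_iff dist_real_def, rule_format, OF \<open>0 < e\<close>]
    obtain R where R: "\<And>c. R \<le> c \<Longrightarrow> \<bar>sm \<mu> {c<..}\<bar> < e"
      by (auto simp: eventually_at_top_linorder)
    define L where "L = max c0 (max R x)"
    obtain c where "L < c" "cont_point \<mu> c"
      using cont_point_between[OF \<mu>, of L "L + 1"] by auto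
    then have c: "c0 < c" "R < c" "x < c" "cont_point \<mu> c" unfolding L_def by auto
    have "(\<lambda>n. sm (\<mu>s n) {x<..c}) \<longlonglongrightarrow> sm \<mu> {x<..c}"
      using c x mass by (intro sm_Ioc_tendsto_if_no_mass[OF ms \<mu> vc]) auto
    moreover have "\<forall>\<^sub>F n in sequentially. \<bar>sm (\<mu>s n) {x<..} - sm (\<mu>s n) {x<..c}\<bar> \<le> e"
      using c0
    proof eventually_elim
      case (elim n)
      have "\<bar>sm (\<mu>s n) {c<..}\<bar> \<le> var (\<mu>s n) {c0<..}"
        using c by (intro abs_sm_le_var[OF ms]) auto
      with elim show ?case using sm_Ioi_split[OF ms, of x c] c by simp
    qed
    moreover have "\<bar>sm \<mu> {x<..} - sm \<mu> {x<..c}\<bar> \<le> e"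
      using sm_Ioi_split[OF \<mu>, of x c] R[of c] c by simp
    ultimately show "\<exists>v w. v \<longlonglongrightarrow> w \<and> (\<forall>\<^sub>F n in sequentially. \<bar>sm (\<mu>s n) {x<..} - v n\<bar> \<le> e)
        \<and> \<bar>sm \<mu> {x<..} - w\<bar> \<le> e"
      by (intro exI[of _ "\<lambda>n. sm (\<mu>s n) {x<..c}"] exI[of _ "sm \<mu> {x<..c}"] conjI)
  qed
  then show "(\<lambda>n. Fdist \<infinity> (\<mu>s n) x) \<longlonglongrightarrow> Fdist \<infinity> \<mu> x"
    by (simp add: Fdist_def tendsto_minus)
qed

section \<open>Vague convergence from convergence on intervals\<close>

lemma uniformly_continuous_if_bounded_support:
  fixes f :: "real \<Rightarrow> real"
  assumes f: "continuous_on UNIV f" and supp: "\<And>x. M < \<bar>x\<bar> \<Longrightarrow> f x = 0"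
  shows "uniformly_continuous_on UNIV f"
  unfolding uniformly_continuous_on_def
proof (intro allI impI)
  fix e :: real assume "0 < e"
  have "uniformly_continuous_on {-M-1..M+1} f"
    using f by (intro compact_uniformly_continuous) (auto intro: continuous_on_subset)
  then obtain d where "0 < d" and d: "\<And>x x'. x \<in> {-M-1..M+1} \<Longrightarrow> x' \<in> {-M-1..M+1} \<Longrightarrow>
      dist x' x < d \<Longrightarrow> dist (f x') (f x) < e"
    using \<open>0 < e\<close> unfolding uniformly_continuous_on_def by metis
  have "dist (f x') (f x) < e" if "dist x' x < min d 1" for x x'
  proof (cases "x \<in> {-M-1..M+1} \<and> x' \<in> {-M-1..M+1}")
    case False
    with that have "M < \<bar>x\<bar>" "M < \<bar>x'\<bar>" by (auto simp: dist_real_def)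
    then show ?thesis using supp \<open>0 < e\<close> by simp
  qed (use d that in auto)
  then show "\<exists>d>0. \<forall>x\<in>UNIV. \<forall>x'\<in>UNIV. dist x' x < d \<longrightarrow> dist (f x') (f x) < e"
    using \<open>0 < d\<close> by (intro exI[of _ "min d 1"]) auto
qed

lemma bounded_borel_if_bounded_support:
  fixes f :: "real \<Rightarrow> real"
  assumes f: "continuous_on UNIV f" and supp: "\<And>x. M < \<bar>x\<bar> \<Longrightarrow> f x = 0"
  shows "bounded_borel f"
proof -
  have "bounded (f ` {-M..M})"
    using f by (intro compact_imp_bounded compact_continuous_image)
      (auto intro: continuous_on_subset)
  then obtain B where B: "\<forall>x\<in>{-M..M}. \<bar>f x\<bar> \<le> B" by (auto simp: bounded_iff)
  have "\<bar>f x\<bar> \<le> \<bar>B\<bar>" for x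
  proof (cases "x \<in> {-M..M}")
    case True
    then show ?thesis using B abs_ge_self order_trans by blast
  next
    case False
    then have "M < \<bar>x\<bar>" by auto
    then show ?thesis using supp by simp
  qed
  then show ?thesis
    using f unfolding bounded_borel_def by (auto intro: borel_measurable_continuous_onI)
qed

lemma grid_cell_iff:
  fixes h s x :: real
  assumes "0 < h"
  shows "x \<in> {s + of_int (i - 1) * h<..s + of_int i * h} \<longleftrightarrow> \<lceil>(x - s) / h\<rceil> = i"
proof -
  have "of_int i - 1 < (x - s) / h \<longleftrightarrow> s + of_int (i - 1) * h < x"
    "(x - s) / h \<le> of_int i \<longleftrightarrow> x \<le> s + of_int i * h"
    using assms by (simp_all add: field_simps)
  then show ?thesis unfolding ceiling_eq_iff by auto
qed

lemma grid_index_bound: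
  fixes h s x M :: real
  assumes "0 < h" "0 \<le> s" "s \<le> h" "\<bar>x\<bar> \<le> M"
  shows "\<bar>\<lceil>(x - s) / h\<rceil>\<bar> \<le> \<lceil>M / h\<rceil> + 1"
proof -
  have "(- M - h) / h \<le> (x - s) / h" "(x - s) / h \<le> M / h"
    using assms by (auto intro!: divide_right_mono)
  moreover have "(- M - h) / h = - M / h - 1"
    using assms(1) by (simp add: diff_divide_distrib)
  ultimately have lower: "- M / h - 1 \<le> (x - s) / h" and upper: "(x - s) / h \<le> M / h"
    by simp_all
  have "real_of_int (- \<lceil>M / h\<rceil> - 1) \<le> (x - s) / h"
    using lower le_of_int_ceiling[of "M / h"] by (simp only: of_int_diff of_int_minus of_int_1)
  from ceiling_mono[OF this] have "- \<lceil>M / h\<rceil> - 1 \<le> \<lceil>(x - s) / h\<rceil>"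
    by (simp only: ceiling_of_int)
  moreover have "\<lceil>(x - s) / h\<rceil> \<le> \<lceil>M / h\<rceil>"
    using upper by (rule ceiling_mono)
  ultimately show ?thesis by (simp add: abs_le_iff)
qed

text \<open>The cells are \<open>{s + (i - 1) h<..s + i h}\<close> for a grid \<open>s + h\<int>\<close> avoiding the atoms of \<open>\<mu>\<close>;
  on each cell the step function takes the value of \<open>f\<close> at its right end point.\<close>
lemma step_approximation:
  fixes f :: "real \<Rightarrow> real"
  assumes \<mu>: "is_smeasure \<mu>" and f: "continuous_on UNIV f"
    and supp: "\<And>x. M < \<bar>x\<bar> \<Longrightarrow> f x = 0" and "0 < \<eta>"
  obtains J :: "int set" and a b y :: "int \<Rightarrow> real" where "finite J"
    "\<And>i. i \<in> J \<Longrightarrow> a i < b i \<and> cont_point \<mu> (a i) \<and> cont_point \<mu> (b i)"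
    "\<And>x. \<bar>f x - (\<Sum>i\<in>J. y i * indicator {a i<..b i} x)\<bar> \<le> \<eta>"
    "\<And>x. M + 1 < \<bar>x\<bar> \<Longrightarrow> f x = (\<Sum>i\<in>J. y i * indicator {a i<..b i} x)"
proof -
  have "uniformly_continuous_on UNIV f"
    by (rule uniformly_continuous_if_bounded_support[where M=M, OF f]) (rule supp)
  then obtain \<delta> where "0 < \<delta>" and \<delta>: "\<And>x x'. \<bar>x' - x\<bar> < \<delta> \<Longrightarrow> \<bar>f x' - f x\<bar> < \<eta>"
    using \<open>0 < \<eta>\<close> unfolding uniformly_continuous_on_def dist_real_def by blast
  define h where "h = min \<delta> 1 / 2"
  have h: "0 < h" "h < \<delta>" "h < 1" unfolding h_def using \<open>0 < \<delta>\<close> by auto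
  obtain s where s: "0 < s" "s < h" and grid: "\<And>i::int. cont_point \<mu> (s + of_int i * h)"
    using cont_point_grid[OF \<mu> \<open>0 < h\<close>] by blast
  define t where "t i = s + of_int i * h" for i :: int
  define k where "k x = \<lceil>(x - s) / h\<rceil>" for x
  define J where "J = {-(\<lceil>M / h\<rceil> + 1)..\<lceil>M / h\<rceil> + 1}"
  have cell: "x \<in> {t (i - 1)<..t i} \<longleftrightarrow> k x = i" for x i
    unfolding t_def k_def using grid_cell_iff[OF h(1)] .
  have near: "\<bar>x - t (k x)\<bar> < h" for x
    using cell[of x "k x"] unfolding t_def by (auto simp: algebra_simps)
  have far: "M < \<bar>x\<bar>" if "k x \<notin> J" for x
  proof (rule ccontr)
    assume "\<not> M < \<bar>x\<bar>"
    then have "\<bar>k x\<bar> \<le> \<lceil>M / h\<rceil> + 1"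
      unfolding k_def using s by (intro grid_index_bound[OF h(1)]) auto
    then show False using that unfolding J_def by auto
  qed
  have "finite J" unfolding J_def by simp
  then have step_eq:
    "(\<Sum>i\<in>J. f (t i) * indicator {t (i - 1)<..t i} x) = (if k x \<in> J then f (t (k x)) else 0)" for x
    unfolding indicator_def cell by (auto simp: if_distrib)
  show ?thesis
  proof (rule that[of J "\<lambda>i. t (i - 1)" t "\<lambda>i. f (t i)"])
    show "t (i - 1) < t i \<and> cont_point \<mu> (t (i - 1)) \<and> cont_point \<mu> (t i)" for i
      using grid[of "i - 1"] grid[of i] h unfolding t_def by (simp add: algebra_simps)
    show "\<bar>f x - (\<Sum>i\<in>J. f (t i) * indicator {t (i - 1)<..t i} x)\<bar> \<le> \<eta>" for x
      using \<delta>[of x "t (k x)"] near[of x] h far[of x] supp[of x] \<open>0 < \<eta>\<close>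
      unfolding step_eq by auto
    show "f x = (\<Sum>i\<in>J. f (t i) * indicator {t (i - 1)<..t i} x)" if "M + 1 < \<bar>x\<bar>" for x
      using near[of x] h that supp[of x] supp[of "t (k x)"] unfolding step_eq by auto
  qed fact
qed

lemma sint_tendsto_if_approximable:
  assumes ms: "\<And>n. is_smeasure (\<mu>s n)" and \<mu>: "is_smeasure \<mu>" and L: "L \<in> sets borel"
    and C: "\<And>n. var (\<mu>s n) L \<le> C" and f: "bounded_borel f"
    and approx: "\<And>\<eta>. 0 < \<eta> \<Longrightarrow> \<exists>g. bounded_borel g \<and> (\<forall>x. \<bar>f x - g x\<bar> \<le> \<eta>)
      \<and> (\<forall>x. x \<notin> L \<longrightarrow> f x = g x) \<and> (\<lambda>n. sint (\<mu>s n) g) \<longlonglongrightarrow> sint \<mu> g"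
  shows "(\<lambda>n. sint (\<mu>s n) f) \<longlonglongrightarrow> sint \<mu> f"
proof (rule LIMSEQ_by_approximation)
  fix e :: real assume "0 < e"
  define V where "V = var \<mu> L"
  have "0 \<le> C" "0 \<le> V"
    using C[of 0] var_nonneg[OF ms L, of 0] var_nonneg[OF \<mu> L] unfolding V_def by auto
  define \<eta> where "\<eta> = e / (C + V + 1)"
  have "0 < \<eta>" "\<eta> * C \<le> e" "\<eta> * V \<le> e"
    using \<open>0 < e\<close> \<open>0 \<le> C\<close> \<open>0 \<le> V\<close> unfolding \<eta>_def by (auto simp: field_simps)
  then obtain g where g: "bounded_borel g" "\<And>x. \<bar>f x - g x\<bar> \<le> \<eta>" "\<And>x. x \<notin> L \<Longrightarrow> f x = g x"
    and "(\<lambda>n. sint (\<mu>s n) g) \<longlonglongrightarrow> sint \<mu> g"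
    using approx by blast
  moreover have "\<bar>sint (\<mu>s n) f - sint (\<mu>s n) g\<bar> \<le> e" for n
  proof -
    have "\<eta> * var (\<mu>s n) L \<le> \<eta> * C"
      using C[of n] \<open>0 < \<eta>\<close> by (simp add: mult_left_mono)
    then show ?thesis using abs_sint_diff_le_var[OF ms L f g] \<open>\<eta> * C \<le> e\<close> by (meson order_trans)
  qed
  moreover have "\<bar>sint \<mu> f - sint \<mu> g\<bar> \<le> e"
    using abs_sint_diff_le_var[OF \<mu> L f g] \<open>\<eta> * V \<le> e\<close> unfolding V_def by linarith
  ultimately show "\<exists>v w. v \<longlonglongrightarrow> w \<and> (\<forall>\<^sub>F n in sequentially. \<bar>sint (\<mu>s n) f - v n\<bar> \<le> e)
      \<and> \<bar>sint \<mu> f - w\<bar> \<le> e"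
    by (intro exI[of _ "\<lambda>n. sint (\<mu>s n) g"] exI[of _ "sint \<mu> g"] conjI always_eventually allI)
qed

lemma vague_conv_if_sm_Ioc_tendsto:
  assumes ms: "\<And>n. is_smeasure (\<mu>s n)" and \<mu>: "is_smeasure \<mu>" and bc: "bounded_on_compacts \<mu>s"
    and Ioc: "\<And>a b. cont_point \<mu> a \<Longrightarrow> cont_point \<mu> b \<Longrightarrow> a < b \<Longrightarrow>
      (\<lambda>n. sm (\<mu>s n) {a<..b}) \<longlonglongrightarrow> sm \<mu> {a<..b}"
  shows "vague_conv \<mu>s \<mu>"
  unfolding vague_conv_def
proof (intro allI impI, elim conjE exE)
  fix f :: "real \<Rightarrow> real" and K
  assume f: "continuous_on UNIV f" and "compact K" and K: "\<forall>x. x \<notin> K \<longrightarrow> f x = 0"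
  obtain M where "\<And>x. x \<in> K \<Longrightarrow> \<bar>x\<bar> \<le> M"
    using compact_imp_bounded[OF \<open>compact K\<close>] by (auto simp: bounded_iff)
  then have supp: "\<And>x. M < \<bar>x\<bar> \<Longrightarrow> f x = 0"
    using K by (meson not_le)
  define L where "L = {-M-1..M+1}"
  have "bdd_above (range (\<lambda>n. var (\<mu>s n) L))"
    using bc unfolding bounded_on_compacts_def L_def by simp
  then obtain C where C: "\<And>n. var (\<mu>s n) L \<le> C"
    by (auto simp: bdd_above_def)
  show "(\<lambda>n. sint (\<mu>s n) f) \<longlonglongrightarrow> sint \<mu> f"
  proof (rule sint_tendsto_if_approximable[OF ms \<mu> _ C])
    show "bounded_borel f"
      by (rule bounded_borel_if_bounded_support[where M=M, OF f supp])
    show "L \<in> sets borel" unfolding L_def by simp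
    fix \<eta> :: real assume "0 < \<eta>"
    obtain J :: "int set" and a b y :: "int \<Rightarrow> real" where J: "finite J"
      and cells: "\<And>i. i \<in> J \<Longrightarrow> a i < b i \<and> cont_point \<mu> (a i) \<and> cont_point \<mu> (b i)"
      and close: "\<And>x. \<bar>f x - (\<Sum>i\<in>J. y i * indicator {a i<..b i} x)\<bar> \<le> \<eta>"
      and equal: "\<And>x. M + 1 < \<bar>x\<bar> \<Longrightarrow> f x = (\<Sum>i\<in>J. y i * indicator {a i<..b i} x)"
      using step_approximation[where M=M, OF \<mu> f supp \<open>0 < \<eta>\<close>] by blast
    define g where "g x = (\<Sum>i\<in>J. y i * indicator {a i<..b i} x)" for x
    have sint_g: "sint \<nu> g = (\<Sum>i\<in>J. y i * sm \<nu> {a i<..b i})" if "is_smeasure \<nu>" for \<nu>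
      unfolding g_def by (rule sint_step[OF that J]) auto
    have "bounded_borel g"
      unfolding g_def
      by (intro bounded_borel_sum J bounded_borel_cmult bounded_borel_indicator) auto
    moreover have "(\<lambda>n. sint (\<mu>s n) g) \<longlonglongrightarrow> sint \<mu> g"
      unfolding sint_g[OF ms] sint_g[OF \<mu>] using cells
      by (intro tendsto_sum tendsto_mult_left Ioc) auto
    moreover have "\<forall>x. x \<notin> L \<longrightarrow> f x = g x"
      using equal unfolding g_def L_def by auto
    ultimately show "\<exists>g. bounded_borel g \<and> (\<forall>x. \<bar>f x - g x\<bar> \<le> \<eta>)
        \<and> (\<forall>x. x \<notin> L \<longrightarrow> f x = g x) \<and> (\<lambda>n. sint (\<mu>s n) g) \<longlonglongrightarrow> sint \<mu> g"
      using close unfolding g_def by blast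
  qed
qed

lemma vague_conv_if_Fconv:
  assumes ms: "\<And>n. is_smeasure (\<mu>s n)" and \<mu>: "is_smeasure \<mu>"
    and F: "Fconv \<alpha> \<mu>s \<mu>" and bc: "bounded_on_compacts \<mu>s"
  shows "vague_conv \<mu>s \<mu>"
proof (rule vague_conv_if_sm_Ioc_tendsto[OF ms \<mu> bc])
  fix a b assume "cont_point \<mu> a" "cont_point \<mu> b" "a < b"
  then have "(\<lambda>n. Fdist \<alpha> (\<mu>s n) b - Fdist \<alpha> (\<mu>s n) a) \<longlonglongrightarrow> Fdist \<alpha> \<mu> b - Fdist \<alpha> \<mu> a"
    using F unfolding Fconv_def by (intro tendsto_diff) auto
  then show "(\<lambda>n. sm (\<mu>s n) {a<..b}) \<longlonglongrightarrow> sm \<mu> {a<..b}"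
    using sm_Ioc_eq_Fdist_diff[OF ms] sm_Ioc_eq_Fdist_diff[OF \<mu>] \<open>a < b\<close> by simp
qed

theorem theorem3p8:
  fixes \<alpha> :: real and \<mu>s :: "nat \<Rightarrow> smeasure" and \<mu> :: smeasure
  assumes "\<And>n. is_smeasure (\<mu>s n)" and "is_smeasure \<mu>"
  shows
    "(Fconv (ereal \<alpha>) \<mu>s \<mu> \<and> bounded_on_compacts \<mu>s \<longrightarrow> vague_conv \<mu>s \<mu>)
   \<and> (vague_conv \<mu>s \<mu> \<and> cont_point \<mu> \<alpha> \<and> (\<forall>x. cont_point \<mu> x \<longrightarrow> no_mass_at \<mu>s x)
        \<longrightarrow> Fconv (ereal \<alpha>) \<mu>s \<mu>)
   \<and> (Fconv (-\<infinity>) \<mu>s \<mu> \<and> bounded_on_compacts \<mu>s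
        \<and> (\<forall>c. bdd_above (range (\<lambda>n. var (\<mu>s n) {..c}))) \<longrightarrow> vague_conv \<mu>s \<mu>)
   \<and> (vague_conv \<mu>s \<mu> \<and> no_mass_at_minf \<mu>s \<and> (\<forall>x. cont_point \<mu> x \<longrightarrow> no_mass_at \<mu>s x)
        \<longrightarrow> Fconv (-\<infinity>) \<mu>s \<mu>)
   \<and> (Fconv \<infinity> \<mu>s \<mu> \<and> bounded_on_compacts \<mu>s
        \<and> (\<forall>c. bdd_above (range (\<lambda>n. var (\<mu>s n) {c<..}))) \<longrightarrow> vague_conv \<mu>s \<mu>)
   \<and> (vague_conv \<mu>s \<mu> \<and> no_mass_at_pinf \<mu>s \<and> (\<forall>x. cont_point \<mu> x \<longrightarrow> no_mass_at \<mu>s x)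
        \<longrightarrow> Fconv \<infinity> \<mu>s \<mu>)"
  using vague_conv_if_Fconv[where \<mu>s=\<mu>s, OF assms]
    Fconv_real_if_vague_conv[where \<mu>s=\<mu>s, OF assms]
    Fconv_minf_if_vague_conv[where \<mu>s=\<mu>s, OF assms]
    Fconv_pinf_if_vague_conv[where \<mu>s=\<mu>s, OF assms]
  by blast

end
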